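(* Let $I\subseteq\mathbb{R}$ be an interval and $\mathscr{M}$ a mean on $I$. Then $\mathscr{M}$ is of type $\mathcal{T}_1^+$ if and only if $\mathscr{M}$ is a quasi-arithmetic mean on $I$, i.e. there is a continuous strictly monotone $f\colon I\to\mathbb{R}$ with $\mathscr{M}(x_1,\dots,x_n)=f^{-1}\big(\frac{f(x_1)+\cdots+f(x_n)}{n}\big)$ for all $n\in\mathbb{N}$ and $x_1,\dots,x_n\in I$.
   Context: A mean on an interval $I$ is a function $\mathscr{M}\colon\bigcup_{n=1}^\infty I^n\to I$ with $\min(a)\le\mathscr{M}(a)\le\max(a)$ for every $a$. For a commutative semigroup $(Y,+)$ and $F\colon I\to Y$, let $\omega F(I):=\bigcup_{n=1}^\infty\{F(x_1)+\cdots+F(x_n): x_i\in I\}$, and for $G\colon\omega F(I)\to I$ define $\mathscr{L}_{F,G}(a_1,\dots,a_n):=G(F(a_1)+\cdots+F(a_n))$. A mean $\mathscr{M}$ on $I$ is of type $\mathcal{T}_k^+$ ($k\in\mathbb{N}$) if $\mathscr{M}=\mathscr{L}_{F,G}$ for some continuous $F\colon I\to(\mathbb{R}^k\times\mathbb{Z},+)$ and some continuous $G\colon\omega F(I)\to I$ (with $\mathbb{Z}$ discrete, product topology on $\mathbb{R}^k\times\mathbb{Z}$, subspace topology on $\omega F(I)$). *)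

theory Defs
  imports "HOL-Analysis.Analysis"
begin

definition is_mean :: "real set \<Rightarrow> (real list \<Rightarrow> real) \<Rightarrow> bool" where
  "is_mean I M \<longleftrightarrow> (\<forall>xs. xs \<noteq> [] \<and> set xs \<subseteq> I \<longrightarrow>
      Min (set xs) \<le> M xs \<and> M xs \<le> Max (set xs))"

definition omegaF :: "(real \<Rightarrow> 'b::monoid_add) \<Rightarrow> real set \<Rightarrow> 'b set" where
  "omegaF F I = {sum_list (map F xs) | xs. xs \<noteq> [] \<and> set xs \<subseteq> I}"

text \<open>The type int carries the discrete topology, real \<times> int the product topology.\<close>
definition type_T1plus :: "real set \<Rightarrow> (real list \<Rightarrow> real) \<Rightarrow> bool" where
  "type_T1plus I M \<longleftrightarrow> (\<exists>(F :: real \<Rightarrow> real \<times> int) (G :: real \<times> int \<Rightarrow> real).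
      continuous_on I F \<and> continuous_on (omegaF F I) G \<and> G ` omegaF F I \<subseteq> I \<and>
      (\<forall>xs. xs \<noteq> [] \<and> set xs \<subseteq> I \<longrightarrow> M xs = G (sum_list (map F xs))))"

definition quasi_arithmetic :: "real set \<Rightarrow> (real list \<Rightarrow> real) \<Rightarrow> bool" where
  "quasi_arithmetic I M \<longleftrightarrow> (\<exists>f :: real \<Rightarrow> real.
      continuous_on I f \<and> (strict_mono_on I f \<or> strict_antimono_on I f) \<and>
      (\<forall>xs. xs \<noteq> [] \<and> set xs \<subseteq> I \<longrightarrow>
         M xs = the_inv_into I f (sum_list (map f xs) / real (length xs))))"

end

theory Submission
  imports Defs
begin

text \<open>
  If \<open>M = G \<circ> (F(x\<^sub>1) + \<dots> + F(x\<^sub>n))\<close> with \<open>F = (\<phi>, \<kappa>)\<close> continuous into \<open>\<real> \<times> \<int>\<close>, the integer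
  component \<open>\<kappa>\<close> is constant on the connected set \<open>I\<close>, so the sum only records \<open>\<Sum> \<phi>(x\<^sub>i)\<close> and \<open>n\<close>.
  The intermediate value theorem gives \<open>y \<in> I\<close> with \<open>\<phi>(y) = (\<Sum> \<phi>(x\<^sub>i)) / n\<close>; the constant tuple
  \<open>(y, \<dots>, y)\<close> then has the same sum, and a mean maps it to \<open>y\<close>, so \<open>M\<close> is the quasi-arithmetic
  mean generated by \<open>\<phi>\<close>. Here \<open>\<phi>\<close> is injective because \<open>G (F x) = M [x] = x\<close>, hence strictly
  monotone. Conversely \<open>f\<^sup>-\<^sup>1((\<Sum> f(x\<^sub>i)) / n)\<close> is \<open>G (\<Sum> F(x\<^sub>i))\<close> for \<open>F = (f, 1)\<close> and
  \<open>G(s, m) = f\<^sup>-\<^sup>1(s / m)\<close>.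
\<close>

lemma connected_discrete_topology_eq_singleton:
  fixes C :: "'a::discrete_topology set"
  assumes "connected C" and "y \<in> C"
  shows "C = {y}"
proof -
  have "{y} \<inter> C = {} \<or> - {y} \<inter> C = {}"
    by (rule connectedD[OF assms(1) open_discrete open_discrete]) auto
  then show ?thesis using assms(2) by auto
qed

lemma continuous_on_discrete_range_constant:
  fixes f :: "'a::topological_space \<Rightarrow> 'b::discrete_topology"
  assumes "connected S" and "continuous_on S f"
  shows "f constant_on S"
proof (rule continuous_disconnected_range_constant[OF assms, of UNIV])
  fix y :: 'b
  show "connected_component_set UNIV y = {y}"
    by (simp add: connected_discrete_topology_eq_singleton connected_component_refl)
qed simp

lemma continuous_on_the_inv_into_1d:
  fixes f :: "'a::topological_space \<Rightarrow> real"
  assumes cont: "continuous_on S f" and "path_connected S" and inj: "inj_on f S"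
  shows "continuous_on (f ` S) (the_inv_into S f)"
proof -
  obtain g where "homeomorphism S (f ` S) f g"
    using injective_into_1d_eq_homeomorphism[OF assms(1,2)] inj by blast
  then have "continuous_on (f ` S) g" and gf: "\<And>x. x \<in> S \<Longrightarrow> g (f x) = x"
    unfolding homeomorphism_def by auto
  moreover have "the_inv_into S f y = g y" if "y \<in> f ` S" for y
    using that by (auto simp: the_inv_into_f_f[OF inj] gf)
  ultimately show ?thesis using continuous_on_cong by blast
qed

lemma is_interval_continuous_image:
  fixes f :: "real \<Rightarrow> real"
  assumes "is_interval I" and "continuous_on I f"
  shows "is_interval (f ` I)"
  using connected_continuous_image[OF assms(2) is_interval_connected[OF assms(1)]]
  by (simp add: is_interval_connected_1)

lemma sum_list_div_length_mem_interval:
  fixes ys :: "real list"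
  assumes J: "is_interval J" and ne: "ys \<noteq> []" and sub: "set ys \<subseteq> J"
  shows "sum_list ys / length ys \<in> J"
proof -
  let ?lo = "Min (set ys)" and ?hi = "Max (set ys)"
  have n: "real (length ys) > 0" using ne by simp
  have "real (length ys) * ?lo \<le> sum_list ys"
    using sum_list_mono[of ys "\<lambda>_. ?lo" id] by (simp add: sum_list_triv)
  then have "?lo \<le> sum_list ys / length ys" using n by (simp add: field_simps)
  moreover have "sum_list ys \<le> real (length ys) * ?hi"
    using sum_list_mono[of ys id "\<lambda>_. ?hi"] by (simp add: sum_list_triv)
  then have "sum_list ys / length ys \<le> ?hi" using n by (simp add: field_simps)
  moreover have "?lo \<in> J" "?hi \<in> J" using ne sub by auto
  ultimately show ?thesis using J unfolding is_interval_1 by blast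
qed

lemma sum_list_map_snd_const:
  fixes F :: "'a \<Rightarrow> 'b::monoid_add \<times> 'c::semiring_1"
  assumes "\<And>x. x \<in> set xs \<Longrightarrow> snd (F x) = k"
  shows "sum_list (map F xs) = (sum_list (map (fst \<circ> F) xs), of_nat (length xs) * k)"
  using assms by (induction xs) (auto simp: prod_eq_iff algebra_simps)

lemma mean_replicate:
  assumes "is_mean I M" and "y \<in> I" and "n > 0"
  shows "M (replicate n y) = y"
proof -
  have "Min {y} \<le> M (replicate n y) \<and> M (replicate n y) \<le> Max {y}"
    using assms(1)[unfolded is_mean_def, rule_format, of "replicate n y"] assms(2,3) by simp
  then show ?thesis by simp
qed

lemma quasi_arithmeticI:
  fixes \<phi> :: "real \<Rightarrow> real"
  assumes interval: "is_interval I" and mean: "is_mean I M"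
    and cont: "continuous_on I \<phi>" and inj: "inj_on \<phi> I"
    and determined: "\<And>xs ys. set xs \<subseteq> I \<Longrightarrow> set ys \<subseteq> I \<Longrightarrow> length ys = length xs \<Longrightarrow>
      sum_list (map \<phi> ys) = sum_list (map \<phi> xs) \<Longrightarrow> M ys = M xs"
  shows "quasi_arithmetic I M"
  unfolding quasi_arithmetic_def
proof (intro exI[of _ \<phi>] conjI allI impI)
  show "strict_mono_on I \<phi> \<or> strict_antimono_on I \<phi>"
    using injective_eq_monotone_map[OF interval cont] inj by blast
  fix xs assume xs: "xs \<noteq> [] \<and> set xs \<subseteq> I"
  let ?n = "length xs" and ?avg = "sum_list (map \<phi> xs) / real (length xs)"
  have "?avg \<in> \<phi> ` I"
    using sum_list_div_length_mem_interval[OF is_interval_continuous_image[OF interval cont], of "map \<phi> xs"] xs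
    by auto
  then obtain y where y: "y \<in> I" "\<phi> y = ?avg" by auto
  have "sum_list (map \<phi> (replicate ?n y)) = sum_list (map \<phi> xs)"
    using xs by (simp add: sum_list_replicate y(2))
  then have "M xs = M (replicate ?n y)"
    using determined[of "replicate ?n y" xs] xs y(1) by simp
  also have "\<dots> = y" using mean_replicate[OF mean y(1)] xs by simp
  finally show "M xs = the_inv_into I \<phi> ?avg"
    using the_inv_into_f_f[OF inj y(1)] y(2) by simp
qed (fact cont)

lemma type_T1plus_imp_quasi_arithmetic:
  assumes interval: "is_interval I" and mean: "is_mean I M" and "type_T1plus I M"
  shows "quasi_arithmetic I M"
proof -
  obtain F :: "real \<Rightarrow> real \<times> int" and G where cont: "continuous_on I F"
    and MG: "\<And>xs. xs \<noteq> [] \<Longrightarrow> set xs \<subseteq> I \<Longrightarrow> M xs = G (sum_list (map F xs))"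
    using assms(3) unfolding type_T1plus_def by blast
  define \<phi> where "\<phi> = fst \<circ> F"
  have "(\<lambda>x. snd (F x)) constant_on I"
    by (rule continuous_on_discrete_range_constant[OF is_interval_connected[OF interval]])
      (intro continuous_intros cont)
  then obtain k where k: "\<And>x. x \<in> I \<Longrightarrow> snd (F x) = k"
    unfolding constant_on_def by auto
  have sumF: "sum_list (map F xs) = (sum_list (map \<phi> xs), of_nat (length xs) * k)"
    if "set xs \<subseteq> I" for xs
    unfolding \<phi>_def using that k by (intro sum_list_map_snd_const) auto
  show ?thesis
  proof (rule quasi_arithmeticI[OF interval mean])
    show "continuous_on I \<phi>" unfolding \<phi>_def using cont by (simp add: continuous_on_fst)
    show "inj_on \<phi> I"
    proof (rule inj_onI)
      fix x y assume "x \<in> I" "y \<in> I" "\<phi> x = \<phi> y"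
      then have "F x = F y" using k \<open>x \<in> I\<close> \<open>y \<in> I\<close> by (simp add: \<phi>_def prod_eq_iff)
      then have "M [x] = M [y]" using MG \<open>x \<in> I\<close> \<open>y \<in> I\<close> by simp
      then show "x = y"
        using mean_replicate[OF mean, of _ 1] \<open>x \<in> I\<close> \<open>y \<in> I\<close> by simp
    qed
    fix xs ys :: "real list"
    assume "set xs \<subseteq> I" "set ys \<subseteq> I" and len: "length ys = length xs"
      and "sum_list (map \<phi> ys) = sum_list (map \<phi> xs)"
    moreover have "xs \<noteq> [] \<longleftrightarrow> ys \<noteq> []" using len by auto
    ultimately show "M ys = M xs"
      by (cases "xs = []") (simp_all add: MG sumF)
  qed
qed

lemma quasi_arithmetic_imp_type_T1plus:
  assumes interval: "is_interval I" and "quasi_arithmetic I M"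
  shows "type_T1plus I M"
proof -
  obtain f where cont: "continuous_on I f" and mono: "strict_mono_on I f \<or> strict_antimono_on I f"
    and Mf: "\<And>xs. xs \<noteq> [] \<and> set xs \<subseteq> I \<Longrightarrow>
      M xs = the_inv_into I f (sum_list (map f xs) / real (length xs))"
    using assms(2) unfolding quasi_arithmetic_def by blast
  have inj: "inj_on f I" using injective_eq_monotone_map[OF interval cont] mono by blast
  define F :: "real \<Rightarrow> real \<times> int" where "F = (\<lambda>x. (f x, 1))"
  define q :: "real \<times> int \<Rightarrow> real" where "q = (\<lambda>p. fst p / real_of_int (snd p))"
  define G where "G = the_inv_into I f \<circ> q"
  have sumF: "sum_list (map F xs) = (sum_list (map f xs), int (length xs))" for xs
    using sum_list_map_snd_const[of xs F 1] by (simp add: F_def o_def)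
  have q_mem: "q p \<in> f ` I \<and> snd p \<noteq> 0" if p: "p \<in> omegaF F I" for p
  proof -
    obtain xs where "xs \<noteq> []" "set xs \<subseteq> I" "p = sum_list (map F xs)"
      using p unfolding omegaF_def by blast
    then show ?thesis
      using sum_list_div_length_mem_interval[OF is_interval_continuous_image[OF interval cont], of "map f xs"]
      by (auto simp: sumF q_def)
  qed
  then have q_image: "q ` omegaF F I \<subseteq> f ` I" by blast
  have "continuous_on (omegaF F I) q"
    unfolding q_def using q_mem by (intro continuous_intros) auto
  then have "continuous_on (omegaF F I) G"
    unfolding G_def
    by (rule continuous_on_compose[OF _ continuous_on_subset[OF
          continuous_on_the_inv_into_1d[OF cont is_interval_path_connected[OF interval] inj] q_image]])
  moreover have "G ` omegaF F I \<subseteq> I"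
    using q_image the_inv_into_into[OF inj _ order_refl] by (auto simp: G_def)
  moreover have "continuous_on I F" unfolding F_def by (intro continuous_intros cont)
  moreover have "M xs = G (sum_list (map F xs))" if "xs \<noteq> [] \<and> set xs \<subseteq> I" for xs
    using Mf[OF that] by (simp add: G_def q_def sumF)
  ultimately show ?thesis
    unfolding type_T1plus_def by (intro exI[of _ F] exI[of _ G]) simp
qed

theorem proposition3p2:
  fixes I :: "real set" and M :: "real list \<Rightarrow> real"
  assumes "is_interval I" and "is_mean I M"
  shows "type_T1plus I M \<longleftrightarrow> quasi_arithmetic I M"
  using type_T1plus_imp_quasi_arithmetic[OF assms] quasi_arithmetic_imp_type_T1plus[OF assms(1)]
  by blast

end
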